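(* Let $\Omega=(a_1,b_1)\times\cdots\times(a_n,b_n)\subset\mathbb{R}^n$ be a bounded box. There is a constant $C_P(\Omega)$, independent of the admissible mesh size vector $h$, such that $\|u\|_{L^2}\le C_P(\Omega)\|u\|_D$ for all $u\in W_0^{1,2}(\overline{\Omega}_h)$. Moreover $$\frac{1}{\lambda_{1,h}}\le C_P(\Omega)^2\le\frac{1}{4n^2}\sum_{i=1}^n(b_i-a_i)^2,$$ where the lower bound is optimal (for fixed $h$ the smallest admissible constant $C$ satisfies $C^2=1/\lambda_{1,h}$).
   Context: Admissible mesh: $h_i>0$, $a_i=k_ih_i$, $b_i=l_ih_i$, $k_i,l_i\in\mathbb{Z}$, $l_i-k_i>1$; $\mathbb{R}^n_h=\{(h_1z_1,\dots,h_nz_n):z_i\in\mathbb{Z}\}$, $\overline{\Omega}_h=\overline{\Omega}\cap\mathbb{R}^n_h$, $\partial\Omega_h=\partial\Omega\cap\mathbb{R}^n_h$, $\partial_i^+\Omega_h=\partial\Omega_h\cap\{x_i=b_i\}$, $\mathbf{h}=h_1\cdots h_n$, $D_i^+u(x)=(u(x+h_ie_i)-u(x))/h_i$. $\|u\|_{L^2}^2=\sum_{x\in\overline{\Omega}_h}|u(x)|^2\mathbf{h}$, $\|u\|_D^2=\sum_{i=1}^n\sum_{x\in\overline{\Omega}_h\setminus\partial_i^+\Omega_h}|D_i^+u(x)|^2\mathbf{h}$. $W_0^{1,2}(\overline{\Omega}_h)$ is the set of $u:\overline{\Omega}_h\to\mathbb{R}$ with $u=0$ on $\partial\Omega_h$.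 $\lambda_{1,h}=\sum_{i=1}^n\frac{4}{h_i^2}\sin^2\big(\frac{\pi h_i}{2(b_i-a_i)}\big)$ is the first Dirichlet eigenvalue of $-\Delta_h$, $\Delta_hu(x)=\sum_i\frac{u(x+h_ie_i)-2u(x)+u(x-h_ie_i)}{h_i^2}$. *)

theory Defs
  imports "HOL-Analysis.Analysis"
begin

text \<open>Points of R^n are functions 'n \<Rightarrow> real for a finite index type 'n (n = CARD('n)).
  The box is Omega = prod_i (a i, b i); h is the mesh size vector.\<close>

definition admissible_mesh :: "('n::finite \<Rightarrow> real) \<Rightarrow> ('n \<Rightarrow> real) \<Rightarrow> ('n \<Rightarrow> real) \<Rightarrow> bool" where
  "admissible_mesh a b h \<longleftrightarrow>
     (\<forall>i. h i > 0 \<and> (\<exists>k l :: int. a i = of_int k * h i \<and> b i = of_int l * h i \<and> l - k > 1))"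

definition grid_closed :: "('n::finite \<Rightarrow> real) \<Rightarrow> ('n \<Rightarrow> real) \<Rightarrow> ('n \<Rightarrow> real) \<Rightarrow> ('n \<Rightarrow> real) set" where
  "grid_closed a b h = {x. \<forall>i. a i \<le> x i \<and> x i \<le> b i \<and> (\<exists>z::int. x i = h i * of_int z)}"

definition grid_boundary :: "('n::finite \<Rightarrow> real) \<Rightarrow> ('n \<Rightarrow> real) \<Rightarrow> ('n \<Rightarrow> real) \<Rightarrow> ('n \<Rightarrow> real) set" where
  "grid_boundary a b h = {x \<in> grid_closed a b h. \<exists>i. x i = a i \<or> x i = b i}"

definition grid_face_plus :: "('n::finite \<Rightarrow> real) \<Rightarrow> ('n \<Rightarrow> real) \<Rightarrow> ('n \<Rightarrow> real) \<Rightarrow> 'n \<Rightarrow> ('n \<Rightarrow> real) set" where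
  "grid_face_plus a b h i = {x \<in> grid_boundary a b h. x i = b i}"

definition cell_volume :: "('n::finite \<Rightarrow> real) \<Rightarrow> real" where
  "cell_volume h = (\<Prod>i\<in>UNIV. h i)"

definition fwd_diff :: "('n \<Rightarrow> real) \<Rightarrow> 'n \<Rightarrow> (('n \<Rightarrow> real) \<Rightarrow> real) \<Rightarrow> ('n \<Rightarrow> real) \<Rightarrow> real" where
  "fwd_diff h i u x = (u (x(i := x i + h i)) - u x) / h i"

definition disc_L2_norm :: "('n::finite \<Rightarrow> real) \<Rightarrow> ('n \<Rightarrow> real) \<Rightarrow> ('n \<Rightarrow> real) \<Rightarrow> (('n \<Rightarrow> real) \<Rightarrow> real) \<Rightarrow> real" where
  "disc_L2_norm a b h u = sqrt (\<Sum>x\<in>grid_closed a b h. (u x)\<^sup>2 * cell_volume h)"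

definition disc_D_norm :: "('n::finite \<Rightarrow> real) \<Rightarrow> ('n \<Rightarrow> real) \<Rightarrow> ('n \<Rightarrow> real) \<Rightarrow> (('n \<Rightarrow> real) \<Rightarrow> real) \<Rightarrow> real" where
  "disc_D_norm a b h u = sqrt (\<Sum>i\<in>UNIV. \<Sum>x\<in>grid_closed a b h - grid_face_plus a b h i.
        (fwd_diff h i u x)\<^sup>2 * cell_volume h)"

text \<open>W_0^{1,2}: functions on the closed grid vanishing on the boundary grid
  (values outside the closed grid are irrelevant to both norms)\<close>
definition W0_grid :: "('n::finite \<Rightarrow> real) \<Rightarrow> ('n \<Rightarrow> real) \<Rightarrow> ('n \<Rightarrow> real) \<Rightarrow> (('n \<Rightarrow> real) \<Rightarrow> real) set" where
  "W0_grid a b h = {u. \<forall>x\<in>grid_boundary a b h. u x = 0}"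

definition lambda1_h :: "('n::finite \<Rightarrow> real) \<Rightarrow> ('n \<Rightarrow> real) \<Rightarrow> ('n \<Rightarrow> real) \<Rightarrow> real" where
  "lambda1_h a b h = (\<Sum>i\<in>UNIV. 4 / (h i)\<^sup>2 * (sin (pi * h i / (2 * (b i - a i))))\<^sup>2)"

end

theory Submission imports Defs begin

text \<open>Ground-state transformation. The product \<open>\<Phi>(x) = \<Prod>\<^sub>i sin (\<pi> (x\<^sub>i - a\<^sub>i) / (b\<^sub>i - a\<^sub>i))\<close>
  satisfies \<open>-\<Delta>\<^sub>h \<Phi> = \<lambda>\<^sub>1\<^sub>,\<^sub>h \<Phi>\<close> on the grid and is positive in the interior. Writing each squared
  difference along an edge \<open>x \<rightarrow> x + h\<^sub>i e\<^sub>i\<close> through the one-dimensional factor of \<open>\<Phi>\<close> (a discrete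
  Picone identity) and summing by parts gives, for every \<open>u\<close> vanishing on the boundary,
  \<open>\<parallel>u\<parallel>\<^sub>D\<^sup>2 = \<lambda>\<^sub>1\<^sub>,\<^sub>h \<parallel>u\<parallel>\<^sub>L\<^sub>2\<^sup>2 + R(u)\<close> with a remainder \<open>R(u) \<ge> 0\<close> that vanishes for \<open>u = \<Phi>\<close>. Hence
  \<open>1/\<lambda>\<^sub>1\<^sub>,\<^sub>h\<close> is the optimal squared constant. The mesh-independent bound follows from
  \<open>sin t \<ge> 5t/6\<close> on \<open>[0,1]\<close>, which gives \<open>\<lambda>\<^sub>1\<^sub>,\<^sub>h \<ge> \<Sum>\<^sub>i 4/(b\<^sub>i - a\<^sub>i)\<^sup>2\<close>, and Cauchy-Schwarz.\<close>

lemma picone_edge_identity: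
  fixes a b p q :: real
  assumes "p \<ge> 0" "q \<ge> 0" "p = 0 \<Longrightarrow> a = 0" "q = 0 \<Longrightarrow> b = 0"
  shows "(b - a)\<^sup>2 = a\<^sup>2 * (1 - q / p) + b\<^sup>2 * (1 - p / q) + (a * q - b * p)\<^sup>2 / (p * q)"
proof (cases "p = 0 \<or> q = 0")
  case True
  then show ?thesis using assms by (auto simp: power2_eq_square)
next
  case False
  then have "p > 0" "q > 0" using assms by auto
  then show ?thesis by (simp add: field_simps power2_eq_square)
qed

lemma sin_ge_five_sixths:
  fixes x :: real
  assumes "0 \<le> x" "x \<le> 1"
  shows "5 * x / 6 \<le> sin x"
proof -
  have "\<bar>sin x - (\<Sum>m<3. sin_coeff m * x ^ m)\<bar> \<le> inverse (fact 3) * \<bar>x\<bar> ^ 3"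
    by (rule Maclaurin_sin_bound)
  moreover have "(\<Sum>m<3. sin_coeff m * x ^ m) = x"
    by (simp add: sin_coeff_def numeral_3_eq_3 lessThan_Suc)
  moreover have "x * (x * x) \<le> x"
    using assms by (intro mult_left_le mult_le_one) auto
  then have "x ^ 3 \<le> x" by (simp add: power3_eq_cube)
  ultimately have "\<bar>sin x - x\<bar> * 6 \<le> x" using assms by (simp add: fact_numeral)
  then show ?thesis by (auto simp: abs_if split: if_splits)
qed

lemma admissible_mesh_pos: "admissible_mesh a b h \<Longrightarrow> h i > 0"
  by (simp add: admissible_mesh_def)

lemma admissible_meshE:
  assumes "admissible_mesh a b h"
  obtains k l :: int where "a i = of_int k * h i" "b i = of_int l * h i" "l - k > 1"
  using assms unfolding admissible_mesh_def by blast

lemma admissible_mesh_two_steps: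
  assumes "admissible_mesh a b h"
  shows "2 * h i \<le> b i - a i"
proof -
  obtain k l :: int where kl: "a i = of_int k * h i" "b i = of_int l * h i" "l - k > 1"
    using assms by (rule admissible_meshE)
  have "2 \<le> real_of_int (l - k)" using kl(3) by linarith
  then have "2 * h i \<le> real_of_int (l - k) * h i"
    using admissible_mesh_pos[OF assms, of i] by (intro mult_right_mono) auto
  then show ?thesis using kl by (simp add: algebra_simps)
qed

lemma admissible_mesh_less: "admissible_mesh a b h \<Longrightarrow> a i < b i"
  using admissible_mesh_two_steps[of a b h i] admissible_mesh_pos[of a b h i] by linarith

lemma cell_volume_pos: "admissible_mesh a b h \<Longrightarrow> cell_volume h > 0"
  unfolding cell_volume_def by (intro prod_pos) (auto simp: admissible_mesh_pos)

lemma grid_closed_coord: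
  "x \<in> grid_closed a b h \<Longrightarrow> a i \<le> x i \<and> x i \<le> b i \<and> (\<exists>z::int. x i = h i * of_int z)"
  by (simp add: grid_closed_def)

lemma finite_grid_closed:
  assumes adm: "admissible_mesh a b h"
  shows "finite (grid_closed a b h)"
proof -
  obtain K L :: "'a \<Rightarrow> int" where KL: "\<And>i. a i = of_int (K i) * h i \<and> b i = of_int (L i) * h i"
    using adm unfolding admissible_mesh_def by metis
  have "grid_closed a b h \<subseteq> Pi\<^sub>E UNIV (\<lambda>i. (\<lambda>z. h i * of_int z) ` {K i..L i})"
  proof
    fix x assume x: "x \<in> grid_closed a b h"
    have "x i \<in> (\<lambda>z. h i * of_int z) ` {K i..L i}" for i
    proof -
      obtain z where z: "x i = h i * of_int z" "a i \<le> x i" "x i \<le> b i"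
        using grid_closed_coord[OF x] by blast
      have "K i \<le> z" "z \<le> L i"
        using z KL[of i] admissible_mesh_pos[OF adm, of i] by (simp_all add: mult.commute)
      then show ?thesis using z by auto
    qed
    then show "x \<in> Pi\<^sub>E UNIV (\<lambda>i. (\<lambda>z. h i * of_int z) ` {K i..L i})"
      by (simp add: PiE_UNIV_domain)
  qed
  moreover have "finite (Pi\<^sub>E UNIV (\<lambda>i. (\<lambda>z. h i * of_int z) ` {K i..L i}))"
    by (intro finite_PiE) auto
  ultimately show ?thesis by (rule finite_subset)
qed

lemma grid_closed_update:
  assumes "x \<in> grid_closed a b h" "a i \<le> t" "t \<le> b i" "\<exists>z::int. t = h i * of_int z"
  shows "x(i := t) \<in> grid_closed a b h"
  using assms by (auto simp: grid_closed_def)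

text \<open>Neighbouring grid values differ by exactly one mesh step, because both ends of
  \<open>[a\<^sub>i, b\<^sub>i]\<close> lie on the lattice \<open>h\<^sub>i \<int>\<close>.\<close>

lemma grid_closed_step_up:
  assumes adm: "admissible_mesh a b h" and x: "x \<in> grid_closed a b h" "x i \<noteq> b i"
  shows "x(i := x i + h i) \<in> grid_closed a b h"
proof -
  obtain k l :: int where kl: "a i = of_int k * h i" "b i = of_int l * h i"
    using adm by (rule admissible_meshE)
  obtain z where z: "x i = h i * of_int z" "a i \<le> x i" "x i \<le> b i"
    using grid_closed_coord[OF x(1)] by blast
  have hp: "h i > 0" using admissible_mesh_pos[OF adm] .
  have "z < l" using z kl x(2) hp by (simp add: mult.commute)
  then have "of_int (z + 1) * h i \<le> of_int l * h i" using hp by (intro mult_right_mono) auto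
  then have "x i + h i \<le> b i" using z kl by (simp add: algebra_simps)
  moreover have "x i + h i = h i * of_int (z + 1)" using z by (simp add: algebra_simps)
  then have "\<exists>z'::int. x i + h i = h i * of_int z'" by blast
  ultimately show ?thesis using x(1) z hp by (intro grid_closed_update) auto
qed

lemma grid_closed_step_down:
  assumes adm: "admissible_mesh a b h" and y: "y \<in> grid_closed a b h" "y i \<noteq> a i"
  shows "y(i := y i - h i) \<in> grid_closed a b h"
proof -
  obtain k l :: int where kl: "a i = of_int k * h i" "b i = of_int l * h i"
    using adm by (rule admissible_meshE)
  obtain z where z: "y i = h i * of_int z" "a i \<le> y i" "y i \<le> b i"
    using grid_closed_coord[OF y(1)] by blast
  have hp: "h i > 0" using admissible_mesh_pos[OF adm] .
  have "k < z" using z kl y(2) hp by (simp add: mult.commute)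
  then have "of_int k * h i \<le> of_int (z - 1) * h i" using hp by (intro mult_right_mono) auto
  then have "a i \<le> y i - h i" using z kl by (simp add: algebra_simps)
  moreover have "y i - h i = h i * of_int (z - 1)" using z by (simp add: algebra_simps)
  then have "\<exists>z'::int. y i - h i = h i * of_int z'" by blast
  ultimately show ?thesis using y(1) z hp by (intro grid_closed_update) auto
qed

lemma bij_betw_grid_step:
  assumes adm: "admissible_mesh a b h"
  shows "bij_betw (\<lambda>x. x(i := x i + h i))
           {x \<in> grid_closed a b h. x i \<noteq> b i} {y \<in> grid_closed a b h. y i \<noteq> a i}"
proof (rule bij_betw_byWitness[where f' = "\<lambda>y. y(i := y i - h i)"])
  have hp: "h i > 0" using admissible_mesh_pos[OF adm] .
  show "(\<lambda>x. x(i := x i + h i)) ` {x \<in> grid_closed a b h. x i \<noteq> b i}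
          \<subseteq> {y \<in> grid_closed a b h. y i \<noteq> a i}"
  proof (rule image_subsetI)
    fix x assume "x \<in> {x \<in> grid_closed a b h. x i \<noteq> b i}"
    moreover from this have "a i \<le> x i" using grid_closed_coord by blast
    ultimately show "x(i := x i + h i) \<in> {y \<in> grid_closed a b h. y i \<noteq> a i}"
      using grid_closed_step_up[OF adm] hp by auto
  qed
  show "(\<lambda>y. y(i := y i - h i)) ` {y \<in> grid_closed a b h. y i \<noteq> a i}
          \<subseteq> {x \<in> grid_closed a b h. x i \<noteq> b i}"
  proof (rule image_subsetI)
    fix y assume "y \<in> {y \<in> grid_closed a b h. y i \<noteq> a i}"
    moreover from this have "y i \<le> b i" using grid_closed_coord by blast
    ultimately show "y(i := y i - h i) \<in> {x \<in> grid_closed a b h. x i \<noteq> b i}"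
      using grid_closed_step_down[OF adm] hp by auto
  qed
qed auto

lemma grid_closed_minus_face_plus:
  "grid_closed a b h - grid_face_plus a b h i = {x \<in> grid_closed a b h. x i \<noteq> b i}"
  by (auto simp: grid_face_plus_def grid_boundary_def)

lemma W0_grid_vanishes:
  "u \<in> W0_grid a b h \<Longrightarrow> x \<in> grid_closed a b h \<Longrightarrow> x i = a i \<or> x i = b i \<Longrightarrow> u x = 0"
  by (auto simp: W0_grid_def grid_boundary_def)

definition sine_mode :: "('n \<Rightarrow> real) \<Rightarrow> ('n \<Rightarrow> real) \<Rightarrow> 'n \<Rightarrow> real \<Rightarrow> real" where
  "sine_mode a b i t = sin (pi * (t - a i) / (b i - a i))"

lemma sine_mode_pos: "a i < t \<Longrightarrow> t < b i \<Longrightarrow> sine_mode a b i t > 0"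
  unfolding sine_mode_def by (intro sin_gt_zero) (auto simp: field_simps)

lemma sine_mode_nonneg:
  assumes "a i \<le> t" "t \<le> b i" "a i < b i"
  shows "sine_mode a b i t \<ge> 0"
proof -
  have "pi * (t - a i) \<le> pi * (b i - a i)" using assms by (intro mult_left_mono) auto
  then have "pi * (t - a i) / (b i - a i) \<le> pi" using assms by (simp add: pos_divide_le_eq)
  then show ?thesis unfolding sine_mode_def using assms by (intro sin_ge_zero) auto
qed

lemma sine_mode_boundary: "a i < b i \<Longrightarrow> t = a i \<or> t = b i \<Longrightarrow> sine_mode a b i t = 0"
  by (auto simp: sine_mode_def)

lemma sine_mode_three_term:
  "sine_mode a b i (t + c) + sine_mode a b i (t - c)
           = 2 * cos (pi * c / (b i - a i)) * sine_mode a b i t"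
proof -
  have "pi * (t + c - a i) / (b i - a i) = pi * (t - a i) / (b i - a i) + pi * c / (b i - a i)"
       "pi * (t - c - a i) / (b i - a i) = pi * (t - a i) / (b i - a i) - pi * c / (b i - a i)"
    by (simp_all add: add_divide_distrib[symmetric] diff_divide_distrib[symmetric] algebra_simps)
  then show ?thesis unfolding sine_mode_def by (simp add: sin_add sin_diff)
qed

lemma sine_mode_discrete_eigen:
  assumes "a i < b i"
  shows "2 * sine_mode a b i t - sine_mode a b i (t + c) - sine_mode a b i (t - c)
           = 4 * (sin (pi * c / (2 * (b i - a i))))\<^sup>2 * sine_mode a b i t"
proof -
  define y where "y = pi * c / (2 * (b i - a i))"
  have "pi * c / (b i - a i) = 2 * y" using assms unfolding y_def by (simp add: field_simps)
  then have cos_y: "cos (pi * c / (b i - a i)) = 1 - 2 * (sin y)\<^sup>2" by (simp add: cos_double_sin)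
  show ?thesis
    using sine_mode_three_term[of a b i t c] unfolding y_def[symmetric]
    by (simp add: cos_y algebra_simps)
qed

lemma sine_mode_nonneg_on_grid:
  "admissible_mesh a b h \<Longrightarrow> x \<in> grid_closed a b h \<Longrightarrow> sine_mode a b i (x i) \<ge> 0"
  using grid_closed_coord[of x a b h i] admissible_mesh_less[of a b h i]
  by (intro sine_mode_nonneg) auto

lemma W0_grid_vanishes_at_sine_zero:
  assumes adm: "admissible_mesh a b h" and u: "u \<in> W0_grid a b h"
    and x: "x \<in> grid_closed a b h" and zero: "sine_mode a b i (x i) = 0"
  shows "u x = 0"
proof (rule ccontr)
  assume "u x \<noteq> 0"
  then have "x i \<noteq> a i" "x i \<noteq> b i" using W0_grid_vanishes[OF u x, of i] by auto
  then have "a i < x i" "x i < b i" using grid_closed_coord[OF x, of i] by auto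
  then show False using sine_mode_pos[of a i "x i" b] zero by simp
qed

text \<open>Summands at a zero of the sine mode are \<open>_ / 0 = 0\<close>, matching the degenerate case of the
  edge identity when \<open>u\<close> vanishes there.\<close>

definition picone_remainder ::
    "('n::finite \<Rightarrow> real) \<Rightarrow> ('n \<Rightarrow> real) \<Rightarrow> ('n \<Rightarrow> real) \<Rightarrow> (('n \<Rightarrow> real) \<Rightarrow> real) \<Rightarrow> 'n \<Rightarrow> real" where
  "picone_remainder a b h u i =
     (\<Sum>x\<in>{x\<in>grid_closed a b h. x i \<noteq> b i}.
        (u x * sine_mode a b i (x i + h i) - u (x(i := x i + h i)) * sine_mode a b i (x i))\<^sup>2
          / (sine_mode a b i (x i) * sine_mode a b i (x i + h i)))"

lemma picone_remainder_nonneg: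
  assumes adm: "admissible_mesh a b h"
  shows "picone_remainder a b h u i \<ge> 0"
  unfolding picone_remainder_def
proof (intro sum_nonneg divide_nonneg_nonneg mult_nonneg_nonneg)
  fix x assume x: "x \<in> {x\<in>grid_closed a b h. x i \<noteq> b i}"
  have "x(i := x i + h i) \<in> grid_closed a b h"
    using grid_closed_step_up[OF adm] x by auto
  then have "sine_mode a b i ((x(i := x i + h i)) i) \<ge> 0" by (rule sine_mode_nonneg_on_grid[OF adm])
  then show "sine_mode a b i (x i) \<ge> 0" "sine_mode a b i (x i + h i) \<ge> 0"
    using sine_mode_nonneg_on_grid[OF adm, of x i] x by auto
qed simp

lemma sum_step_sq_eq_picone:
  assumes adm: "admissible_mesh a b h" and u: "u \<in> W0_grid a b h"
  shows "(\<Sum>x\<in>{x\<in>grid_closed a b h. x i \<noteq> b i}. (u (x(i := x i + h i)) - u x)\<^sup>2) =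
     4 * (sin (pi * h i / (2 * (b i - a i))))\<^sup>2 * (\<Sum>x\<in>grid_closed a b h. (u x)\<^sup>2)
     + picone_remainder a b h u i"
proof -
  define G where "G = grid_closed a b h"
  define A where "A = {x\<in>G. x i \<noteq> b i}"
  define B where "B = {y\<in>G. y i \<noteq> a i}"
  define P where "P = sine_mode a b i"
  define sh where "sh = (\<lambda>x::'a \<Rightarrow> real. x(i := x i + h i))"
  define s where "s = 4 * (sin (pi * h i / (2 * (b i - a i))))\<^sup>2"
  have finG: "finite G" unfolding G_def using finite_grid_closed[OF adm] .
  have ab: "a i < b i" using admissible_mesh_less[OF adm] .
  have nonneg: "P (x i) \<ge> 0" if "x \<in> G" for x
    using sine_mode_nonneg_on_grid[OF adm] that unfolding G_def P_def .
  have zero: "u x = 0" if "x \<in> G" "P (x i) = 0" for x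
    using W0_grid_vanishes_at_sine_zero[OF adm u] that unfolding G_def P_def .
  have shA: "sh x \<in> G" "sh x i = x i + h i" if "x \<in> A" for x
    using grid_closed_step_up[OF adm, of x i] that unfolding A_def G_def sh_def by auto
  define f where "f = (\<lambda>x. (u x)\<^sup>2 * (1 - P (x i + h i) / P (x i)))"
  define g where "g = (\<lambda>y. (u y)\<^sup>2 * (1 - P (y i - h i) / P (y i)))"
  have "(u (sh x) - u x)\<^sup>2 = f x + g (sh x)
     + (u x * P (x i + h i) - u (sh x) * P (x i))\<^sup>2 / (P (x i) * P (x i + h i))" if "x \<in> A" for x
  proof -
    have xG: "x \<in> G" using that unfolding A_def by auto
    have "P (x i + h i) \<ge> 0" "P (x i + h i) = 0 \<Longrightarrow> u (sh x) = 0"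
      using nonneg[OF shA(1)[OF that]] zero[OF shA(1)[OF that]] unfolding shA(2)[OF that] by auto
    moreover have "g (sh x) = (u (sh x))\<^sup>2 * (1 - P (x i) / P (x i + h i))"
      unfolding g_def shA(2)[OF that] by simp
    ultimately show ?thesis
      unfolding f_def using nonneg[OF xG] zero[OF xG]
      by (subst picone_edge_identity[of "P (x i)" "P (x i + h i)" "u x" "u (sh x)"]) auto
  qed
  then have split: "(\<Sum>x\<in>A. (u (sh x) - u x)\<^sup>2)
      = (\<Sum>x\<in>A. f x) + (\<Sum>x\<in>A. g (sh x)) + picone_remainder a b h u i"
    unfolding picone_remainder_def A_def G_def P_def sh_def by (simp add: sum.distrib)
  have f_sum: "(\<Sum>x\<in>A. f x) = (\<Sum>x\<in>G. f x)"
    using W0_grid_vanishes[OF u] by (intro sum.mono_neutral_left finG) (auto simp: A_def G_def f_def)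
  \<comment> \<open>Summation by parts: each edge term \<open>g (sh x)\<close> belongs to the upper endpoint \<open>sh x\<close>.\<close>
  have "(\<Sum>x\<in>A. g (sh x)) = (\<Sum>y\<in>B. g y)"
    using sum.reindex_bij_betw[OF bij_betw_grid_step[OF adm]] unfolding A_def B_def G_def sh_def .
  also have "\<dots> = (\<Sum>y\<in>G. g y)"
    using W0_grid_vanishes[OF u] by (intro sum.mono_neutral_left finG) (auto simp: B_def G_def g_def)
  finally have g_sum: "(\<Sum>x\<in>A. g (sh x)) = (\<Sum>y\<in>G. g y)" .
  have "f x + g x = s * (u x)\<^sup>2" if "x \<in> G" for x
  proof (cases "P (x i) = 0")
    case True
    then show ?thesis using zero[OF that] unfolding f_def g_def by simp
  next
    case False
    have "f x + g x = (u x)\<^sup>2 * ((2 * P (x i) - P (x i + h i) - P (x i - h i)) / P (x i))"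
      unfolding f_def g_def using False by (simp add: field_simps)
    then show ?thesis
      using sine_mode_discrete_eigen[where a=a and b=b and i=i and t="x i" and c="h i", OF ab] False unfolding P_def s_def by simp
  qed
  then have "(\<Sum>x\<in>G. f x) + (\<Sum>x\<in>G. g x) = s * (\<Sum>x\<in>G. (u x)\<^sup>2)"
    by (simp add: sum.distrib[symmetric] sum_distrib_left)
  then show ?thesis
    using split f_sum g_sum unfolding A_def G_def s_def sh_def by simp
qed

lemma disc_D_norm_energy_identity:
  assumes adm: "admissible_mesh a b h" and u: "u \<in> W0_grid a b h"
  shows "(disc_D_norm a b h u)\<^sup>2 = lambda1_h a b h * (disc_L2_norm a b h u)\<^sup>2
           + (\<Sum>i\<in>UNIV. cell_volume h / (h i)\<^sup>2 * picone_remainder a b h u i)"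
proof -
  define L2 where "L2 = (\<Sum>x\<in>grid_closed a b h. (u x)\<^sup>2 * cell_volume h)"
  have cell: "cell_volume h \<ge> 0" using cell_volume_pos[OF adm] by simp
  have direction: "(\<Sum>x\<in>grid_closed a b h - grid_face_plus a b h i. (fwd_diff h i u x)\<^sup>2 * cell_volume h)
     = 4 / (h i)\<^sup>2 * (sin (pi * h i / (2 * (b i - a i))))\<^sup>2 * L2
       + cell_volume h / (h i)\<^sup>2 * picone_remainder a b h u i" for i
  proof -
    have "(\<Sum>x\<in>grid_closed a b h - grid_face_plus a b h i. (fwd_diff h i u x)\<^sup>2 * cell_volume h)
       = cell_volume h / (h i)\<^sup>2 * (\<Sum>x\<in>{x\<in>grid_closed a b h. x i \<noteq> b i}. (u (x(i := x i + h i)) - u x)\<^sup>2)"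
      unfolding grid_closed_minus_face_plus fwd_diff_def
      by (simp add: sum_distrib_left power_divide ac_simps)
    then show ?thesis
      unfolding sum_step_sq_eq_picone[OF adm u] L2_def
      by (simp add: sum_distrib_left sum_distrib_right sum_divide_distrib algebra_simps)
  qed
  have "(disc_D_norm a b h u)\<^sup>2
      = (\<Sum>i\<in>UNIV. \<Sum>x\<in>grid_closed a b h - grid_face_plus a b h i. (fwd_diff h i u x)\<^sup>2 * cell_volume h)"
    unfolding disc_D_norm_def using cell by (simp add: sum_nonneg)
  also have "\<dots> = lambda1_h a b h * L2 + (\<Sum>i\<in>UNIV. cell_volume h / (h i)\<^sup>2 * picone_remainder a b h u i)"
    unfolding direction lambda1_h_def by (simp add: sum.distrib sum_distrib_right)
  also have "L2 = (disc_L2_norm a b h u)\<^sup>2"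
    unfolding disc_L2_norm_def L2_def using cell by (simp add: sum_nonneg)
  finally show ?thesis .
qed

definition ground_state :: "('n::finite \<Rightarrow> real) \<Rightarrow> ('n \<Rightarrow> real) \<Rightarrow> ('n \<Rightarrow> real) \<Rightarrow> real" where
  "ground_state a b x = (\<Prod>j\<in>UNIV. sine_mode a b j (x j))"

lemma ground_state_split:
  "ground_state a b x = sine_mode a b i (x i) * (\<Prod>j\<in>UNIV - {i}. sine_mode a b j (x j))"
  unfolding ground_state_def by (simp add: prod.remove[of UNIV i])

lemma ground_state_in_W0_grid:
  assumes adm: "admissible_mesh a b h"
  shows "ground_state a b \<in> W0_grid a b h"
  unfolding W0_grid_def
proof (intro CollectI ballI)
  fix x assume "x \<in> grid_boundary a b h"
  then obtain i where "x i = a i \<or> x i = b i" unfolding grid_boundary_def by blast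
  then have "sine_mode a b i (x i) = 0"
    using sine_mode_boundary[of a i b "x i"] admissible_mesh_less[OF adm, of i] by blast
  then show "ground_state a b x = 0" unfolding ground_state_split[of a b x i] by simp
qed

lemma picone_remainder_ground_state: "picone_remainder a b h (ground_state a b) i = 0"
proof -
  have "(\<Prod>j\<in>UNIV - {i}. sine_mode a b j ((x(i := t)) j)) = (\<Prod>j\<in>UNIV - {i}. sine_mode a b j (x j))"
    for x :: "'a \<Rightarrow> real" and t by (intro prod.cong) auto
  then have "ground_state a b (x(i := x i + h i))
          = sine_mode a b i (x i + h i) * (\<Prod>j\<in>UNIV - {i}. sine_mode a b j (x j))" for x
    unfolding ground_state_split[of _ _ _ i] by simp
  then show ?thesis
    unfolding picone_remainder_def ground_state_split[of _ _ _ i] by (simp add: algebra_simps)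
qed

lemma disc_L2_norm_ground_state_pos:
  assumes adm: "admissible_mesh a b h"
  shows "disc_L2_norm a b h (ground_state a b) > 0"
proof -
  define x0 where "x0 = (\<lambda>j. a j + h j)"
  have inside: "a j < x0 j \<and> x0 j < b j" for j
    using admissible_mesh_pos[OF adm, of j] admissible_mesh_two_steps[OF adm, of j]
    unfolding x0_def by auto
  have "x0 \<in> grid_closed a b h"
  proof -
    have "\<exists>z::int. x0 j = h j * of_int z" for j
    proof -
      obtain k l :: int where "a j = of_int k * h j" using adm by (rule admissible_meshE)
      then have "x0 j = h j * of_int (k + 1)" unfolding x0_def by (simp add: algebra_simps)
      then show ?thesis by blast
    qed
    then show ?thesis using inside by (auto simp: grid_closed_def less_imp_le)
  qed
  moreover have "ground_state a b x0 > 0"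
    unfolding ground_state_def using inside by (intro prod_pos sine_mode_pos) auto
  ultimately have "(\<Sum>x\<in>grid_closed a b h. (ground_state a b x)\<^sup>2 * cell_volume h) > 0"
    using cell_volume_pos[OF adm] finite_grid_closed[OF adm]
    by (intro sum_pos2[of _ x0]) auto
  then show ?thesis unfolding disc_L2_norm_def by simp
qed

lemma sin_mode_eigenvalue_ge:
  fixes h L :: real
  assumes hp: "0 < h" and hL: "2 * h \<le> L"
  shows "4 / L\<^sup>2 \<le> 4 / h\<^sup>2 * (sin (pi * h / (2 * L)))\<^sup>2"
proof -
  define x where "x = pi * h / (2 * L)"
  have Lp: "L > 0" using hp hL by linarith
  have x0: "0 \<le> x" unfolding x_def using hp Lp by simp
  have "x \<le> pi / 4" unfolding x_def using hp Lp hL by (simp add: field_simps)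
  then have "x \<le> 1" using pi_less_4 by linarith
  then have "(5 * x / 6)\<^sup>2 \<le> (sin x)\<^sup>2"
    using sin_ge_five_sixths x0 by (intro power_mono) auto
  then have "4 / h\<^sup>2 * (5 * x / 6)\<^sup>2 \<le> 4 / h\<^sup>2 * (sin x)\<^sup>2"
    by (intro mult_left_mono) auto
  moreover have "4 / h\<^sup>2 * (5 * x / 6)\<^sup>2 = 25 * pi\<^sup>2 / (36 * L\<^sup>2)"
    unfolding x_def using hp Lp by (simp add: field_simps power2_eq_square)
  moreover have "3\<^sup>2 \<le> pi\<^sup>2" using pi_gt3 by (intro power_mono) auto
  then have "4 / L\<^sup>2 \<le> 25 * pi\<^sup>2 / (36 * L\<^sup>2)" using Lp by (simp add: field_simps)
  ultimately show ?thesis unfolding x_def by linarith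
qed

lemma lambda1_h_ge:
  assumes adm: "admissible_mesh a b h"
  shows "4 * (\<Sum>i\<in>UNIV. 1 / (b i - a i)\<^sup>2) \<le> lambda1_h a b h"
  unfolding lambda1_h_def sum_distrib_left
  using sin_mode_eigenvalue_ge[OF admissible_mesh_pos[OF adm] admissible_mesh_two_steps[OF adm]]
  by (intro sum_mono) simp

lemma sum_inverse_sq_pos:
  fixes a b :: "'n::finite \<Rightarrow> real"
  assumes "\<And>i. a i < b i"
  shows "(\<Sum>i\<in>UNIV. 1 / (b i - a i)\<^sup>2) > 0"
  using assms by (intro sum_pos) (auto, metis less_irrefl)

lemma lambda1_h_pos:
  assumes "admissible_mesh a b h"
  shows "lambda1_h a b h > 0"
proof -
  have "(\<Sum>i\<in>UNIV. 1 / (b i - a i)\<^sup>2) > 0"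
    by (rule sum_inverse_sq_pos) (rule admissible_mesh_less[OF assms])
  then show ?thesis using lambda1_h_ge[OF assms] by linarith
qed

lemma inverse_lambda1_h_le:
  fixes a b :: "'n::finite \<Rightarrow> real"
  assumes adm: "admissible_mesh a b h"
  shows "1 / lambda1_h a b h \<le> 1 / (4 * (real CARD('n))\<^sup>2) * (\<Sum>i\<in>UNIV. (b i - a i)\<^sup>2)"
proof -
  define S where "S = (\<Sum>i\<in>UNIV. 1 / (b i - a i)\<^sup>2)"
  have L: "b i - a i > 0" for i using admissible_mesh_less[OF adm] by simp
  have Sp: "S > 0" unfolding S_def by (rule sum_inverse_sq_pos) (rule admissible_mesh_less[OF adm])
  have "(\<Sum>i\<in>UNIV. 1 / (b i - a i) * (b i - a i))\<^sup>2
          \<le> (\<Sum>i\<in>UNIV. (1 / (b i - a i))\<^sup>2) * (\<Sum>i\<in>UNIV. (b i - a i)\<^sup>2)"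
    by (rule Cauchy_Schwarz_ineq_sum)
  then have cs: "(real CARD('n))\<^sup>2 \<le> S * (\<Sum>i\<in>UNIV. (b i - a i)\<^sup>2)"
    using L unfolding S_def by (simp add: power_divide less_le)
  have "1 / lambda1_h a b h \<le> 1 / (4 * S)"
    using lambda1_h_ge[OF adm] Sp unfolding S_def by (intro divide_left_mono) auto
  also have "\<dots> \<le> 1 / (4 * (real CARD('n))\<^sup>2) * (\<Sum>i\<in>UNIV. (b i - a i)\<^sup>2)"
    using cs Sp by (simp add: field_simps)
  finally show ?thesis .
qed

lemma disc_D_norm_nonneg: "admissible_mesh a b h \<Longrightarrow> disc_D_norm a b h u \<ge> 0"
  unfolding disc_D_norm_def
  by (intro real_sqrt_ge_zero sum_nonneg mult_nonneg_nonneg) (auto dest: cell_volume_pos)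

lemma discrete_poincare_sharp:
  assumes adm: "admissible_mesh a b h" and u: "u \<in> W0_grid a b h"
  shows "disc_L2_norm a b h u \<le> sqrt (1 / lambda1_h a b h) * disc_D_norm a b h u"
proof -
  have lp: "lambda1_h a b h > 0" using lambda1_h_pos[OF adm] .
  have "(\<Sum>i\<in>UNIV. cell_volume h / (h i)\<^sup>2 * picone_remainder a b h u i) \<ge> 0"
    using picone_remainder_nonneg[OF adm] cell_volume_pos[OF adm]
    by (intro sum_nonneg mult_nonneg_nonneg) auto
  then have "lambda1_h a b h * (disc_L2_norm a b h u)\<^sup>2 \<le> (disc_D_norm a b h u)\<^sup>2"
    unfolding disc_D_norm_energy_identity[OF adm u] by simp
  then have "(disc_L2_norm a b h u)\<^sup>2 \<le> (disc_D_norm a b h u)\<^sup>2 / lambda1_h a b h"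
    using lp by (simp add: pos_le_divide_eq mult.commute)
  also have "\<dots> = (sqrt (1 / lambda1_h a b h) * disc_D_norm a b h u)\<^sup>2"
    using lp by (simp add: power_mult_distrib)
  finally have "(disc_L2_norm a b h u)\<^sup>2 \<le> (sqrt (1 / lambda1_h a b h) * disc_D_norm a b h u)\<^sup>2" .
  then show ?thesis
    by (rule power2_le_imp_le) (simp add: disc_D_norm_nonneg[OF adm] less_imp_le[OF lp])
qed

lemma discrete_poincare_optimal:
  assumes adm: "admissible_mesh a b h" and "C \<ge> 0"
    and poincare: "\<forall>u\<in>W0_grid a b h. disc_L2_norm a b h u \<le> C * disc_D_norm a b h u"
  shows "1 / lambda1_h a b h \<le> C\<^sup>2"
proof -
  define N where "N = disc_L2_norm a b h (ground_state a b)"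
  have lp: "lambda1_h a b h > 0" using lambda1_h_pos[OF adm] .
  have Np: "N > 0" unfolding N_def using disc_L2_norm_ground_state_pos[OF adm] .
  have "(disc_D_norm a b h (ground_state a b))\<^sup>2 = lambda1_h a b h * N\<^sup>2"
    unfolding disc_D_norm_energy_identity[OF adm ground_state_in_W0_grid[OF adm]] N_def
    by (simp add: picone_remainder_ground_state)
  moreover have "N \<le> C * disc_D_norm a b h (ground_state a b)"
    using poincare ground_state_in_W0_grid[OF adm] unfolding N_def by blast
  then have "N\<^sup>2 \<le> C\<^sup>2 * (disc_D_norm a b h (ground_state a b))\<^sup>2"
    using Np by (metis less_imp_le power_mono power_mult_distrib)
  ultimately have "1 \<le> C\<^sup>2 * lambda1_h a b h" using Np by (simp add: field_simps)
  then show ?thesis using lp by (simp add: field_simps)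
qed

theorem mainTheorem5:
  fixes a b :: "'n::finite \<Rightarrow> real"
  assumes "\<forall>i. a i < b i"
  shows "\<exists>CP::real.
    (\<forall>h. admissible_mesh a b h \<longrightarrow>
       (\<forall>u\<in>W0_grid a b h. disc_L2_norm a b h u \<le> CP * disc_D_norm a b h u)) \<and>
    (\<forall>h. admissible_mesh a b h \<longrightarrow> 1 / lambda1_h a b h \<le> CP\<^sup>2) \<and>
    CP\<^sup>2 \<le> 1 / (4 * (real CARD('n))\<^sup>2) * (\<Sum>i\<in>UNIV. (b i - a i)\<^sup>2) \<and>
    (\<forall>h. admissible_mesh a b h \<longrightarrow>
       (\<forall>u\<in>W0_grid a b h. disc_L2_norm a b h u \<le> sqrt (1 / lambda1_h a b h) * disc_D_norm a b h u) \<and>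
       (\<forall>C. C \<ge> 0 \<longrightarrow> (\<forall>u\<in>W0_grid a b h. disc_L2_norm a b h u \<le> C * disc_D_norm a b h u)
             \<longrightarrow> 1 / lambda1_h a b h \<le> C\<^sup>2))"
proof -
  define K where "K = 1 / (4 * (real CARD('n))\<^sup>2) * (\<Sum>i\<in>UNIV. (b i - a i)\<^sup>2)"
  have CP2: "(sqrt K)\<^sup>2 = K" unfolding K_def by (simp add: sum_nonneg)
  have uniform: "disc_L2_norm a b h u \<le> sqrt K * disc_D_norm a b h u"
    if adm: "admissible_mesh a b h" and u: "u \<in> W0_grid a b h" for h u
  proof -
    have "sqrt (1 / lambda1_h a b h) \<le> sqrt K"
      using inverse_lambda1_h_le[OF adm] unfolding K_def by simp
    then show ?thesis
      using discrete_poincare_sharp[OF adm u] disc_D_norm_nonneg[OF adm]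
      by (meson mult_right_mono order_trans)
  qed
  have lower: "1 / lambda1_h a b h \<le> (sqrt K)\<^sup>2" if "admissible_mesh a b h" for h
    using CP2 inverse_lambda1_h_le[OF that] unfolding K_def by simp
  have bound: "(sqrt K)\<^sup>2 \<le> 1 / (4 * (real CARD('n))\<^sup>2) * (\<Sum>i\<in>UNIV. (b i - a i)\<^sup>2)"
    using CP2 unfolding K_def by simp
  show ?thesis
    by (intro exI[of _ "sqrt K"] conjI allI impI ballI)
      (blast intro: uniform lower bound discrete_poincare_sharp discrete_poincare_optimal)+
qed

end
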